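(* Let $B$ be a finite set and $\gamma\subseteq B^2$ a binary relation such that for some $0,1\in B$ we have $(0,1),(0,0),(1,1)\in\gamma$ and $(1,0)\notin\gamma$. Let $\mathbf B=(B;\gamma)$. Then $\mathrm{CSP}(\mathbf B)$ is not constant-query testable (even with two-sided error).
   Context: $\mathrm{CSP}(\mathbf B)$: instances $(V,\mathcal C,w)$ with constraints $\langle(x,y),\gamma\rangle$, $x,y\in V$, and weights $w:V\to[0,1]$ summing to 1; an assignment $f:V\to B$ is satisfying if $(f(x),f(y))\in\gamma$ for all constraints. $\mathrm{dist}_{\mathcal I}(f)$ is the minimum total weight of variables where $f$ differs from a satisfying assignment; $f$ is $\epsilon$-far if $\mathrm{dist}_{\mathcal I}(f)>\epsilon$. An $\epsilon$-tester gets the instance and $\epsilon$ in full, queries values of $f$, accepts satisfying $f$ with probability $\ge 2/3$ and rejects $\epsilon$-far $f$ with probability $\ge2/3$. Constant-query testable means: for every $\epsilon\in(0,1)$ there is an $\epsilon$-tester whose number of queries is bounded by a function of $\epsilon$ alone, independent of the number $n=|V|$ of variables. *)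

theory Defs
  imports "HOL-Probability.Probability"
begin

text \<open>An instance is (V, C, w): a finite variable set V (variables are natural numbers),
  a set C of scopes (x,y) (each standing for the constraint <(x,y),gamma>), and weights w.\<close>

definition csp_instance :: "nat set \<Rightarrow> (nat \<times> nat) set \<Rightarrow> (nat \<Rightarrow> real) \<Rightarrow> bool" where
  "csp_instance V C w \<longleftrightarrow> finite V \<and> C \<subseteq> V \<times> V \<and>
     (\<forall>x\<in>V. 0 \<le> w x \<and> w x \<le> 1) \<and> (\<Sum>x\<in>V. w x) = 1"

definition is_assignment :: "'b set \<Rightarrow> nat set \<Rightarrow> (nat \<Rightarrow> 'b) \<Rightarrow> bool" where
  "is_assignment B V f \<longleftrightarrow> (\<forall>x\<in>V. f x \<in> B)"

definition satisfying :: "'b set \<Rightarrow> ('b \<times> 'b) set \<Rightarrow> nat set \<Rightarrow> (nat \<times> nat) set \<Rightarrow> (nat \<Rightarrow> 'b) \<Rightarrow> bool" where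
  "satisfying B \<gamma> V C f \<longleftrightarrow> is_assignment B V f \<and> (\<forall>(x,y)\<in>C. (f x, f y) \<in> \<gamma>)"

definition csp_dist :: "'b set \<Rightarrow> ('b \<times> 'b) set \<Rightarrow> nat set \<Rightarrow> (nat \<times> nat) set \<Rightarrow> (nat \<Rightarrow> real)
    \<Rightarrow> (nat \<Rightarrow> 'b) \<Rightarrow> real" where
  "csp_dist B \<gamma> V C w f = Inf {(\<Sum>x\<in>{x\<in>V. f x \<noteq> g x}. w x) | g. satisfying B \<gamma> V C g}"

definition eps_far :: "'b set \<Rightarrow> ('b \<times> 'b) set \<Rightarrow> nat set \<Rightarrow> (nat \<times> nat) set \<Rightarrow> (nat \<Rightarrow> real)
    \<Rightarrow> real \<Rightarrow> (nat \<Rightarrow> 'b) \<Rightarrow> bool" where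
  "eps_far B \<gamma> V C w \<epsilon> f \<longleftrightarrow> csp_dist B \<gamma> V C w f > \<epsilon>"

text \<open>Deterministic adaptive query algorithms: decision trees that query a variable and
  branch on its value; leaves output accept (True) / reject (False).  A randomized
  tester is a probability distribution over such trees.\<close>
datatype ('v, 'b) qtree = Leaf bool | Query 'v "'b \<Rightarrow> ('v, 'b) qtree"

primrec run_tree :: "('v, 'b) qtree \<Rightarrow> ('v \<Rightarrow> 'b) \<Rightarrow> bool" where
  "run_tree (Leaf r) f = r"
| "run_tree (Query x k) f = run_tree (k (f x)) f"

primrec valid_tree :: "'v set \<Rightarrow> 'b set \<Rightarrow> ('v, 'b) qtree \<Rightarrow> nat \<Rightarrow> bool" where
  "valid_tree V B (Leaf r) q = True"
| "valid_tree V B (Query x k) q = (0 < q \<and> x \<in> V \<and> (\<forall>b\<in>B. valid_tree V B (k b) (q - 1)))"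

definition accept_prob :: "(nat, 'b) qtree pmf \<Rightarrow> (nat \<Rightarrow> 'b) \<Rightarrow> real" where
  "accept_prob T f = measure_pmf.prob T {t. run_tree t f}"

definition is_tester :: "'b set \<Rightarrow> ('b \<times> 'b) set \<Rightarrow> nat set \<Rightarrow> (nat \<times> nat) set \<Rightarrow> (nat \<Rightarrow> real)
    \<Rightarrow> real \<Rightarrow> nat \<Rightarrow> (nat, 'b) qtree pmf \<Rightarrow> bool" where
  "is_tester B \<gamma> V C w \<epsilon> q T \<longleftrightarrow>
     (\<forall>t\<in>set_pmf T. valid_tree V B t q) \<and>
     (\<forall>f. satisfying B \<gamma> V C f \<longrightarrow> accept_prob T f \<ge> 2/3) \<and>
     (\<forall>f. is_assignment B V f \<and> eps_far B \<gamma> V C w \<epsilon> f \<longrightarrow> 1 - accept_prob T f \<ge> 2/3)"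

definition constant_query_testable :: "'b set \<Rightarrow> ('b \<times> 'b) set \<Rightarrow> bool" where
  "constant_query_testable B \<gamma> \<longleftrightarrow>
     (\<forall>\<epsilon>::real. 0 < \<epsilon> \<and> \<epsilon> < 1 \<longrightarrow>
        (\<exists>q::nat. \<forall>V C w. csp_instance V C w \<longrightarrow> (\<exists>T. is_tester B \<gamma> V C w \<epsilon> q T)))"

end

theory Submission
  imports Defs "HOL-Library.Nat_Bijection"
begin

(* On {zero, one} the relation gamma is the order of the booleans, so the argument is a lower
  bound for testing monotonicity along a hypercube, via Yao's principle.
  The instance consists of two copies of the Boolean cube on t coordinates, each with the
  constraints x -> insert j x from a lower to an upper layer. For a direction i and a family A
  of sets, the bits cube_bits True i A satisfy all constraints, whereas cube_bits False i A flip
  the upper end of every edge in direction i; each set x without i then yields a violated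
  constraint in exactly one of the copies, i.e. 2^(t-1) disjoint violations and distance 1/8.
  A decision tree with q queries reads fewer than 2^q vertices. Unless two of them differ
  exactly in coordinate i, which happens for at most 4^q directions, toggling membership in A
  of the sets it reads turns each far input into a satisfying one that the tree cannot tell
  apart. Averaging over i < t and all A, a tester's acceptance probabilities on the two
  ensembles differ by at most 4^q / t, contradicting the gap between 2/3 and 1/3 once
  t > 3 * 4^q. *)

primrec tree_queries :: "('v, 'b) qtree \<Rightarrow> 'b set \<Rightarrow> 'v set" where
  "tree_queries (Leaf r) Bs = {}"
| "tree_queries (Query x k) Bs = insert x (\<Union>b\<in>Bs. tree_queries (k b) Bs)"

lemma run_tree_cong:
  assumes "\<forall>v\<in>tree_queries t Bs. f v \<in> Bs \<and> f v = g v"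
  shows "run_tree t f = run_tree t g"
  using assms
proof (induction t)
  case (Query x k)
  then have fx: "f x \<in> Bs" "f x = g x"
    by force+
  have "\<forall>v\<in>tree_queries (k (f x)) Bs. f v \<in> Bs \<and> f v = g v"
    using Query.prems fx(1) unfolding tree_queries.simps by blast
  then have "run_tree (k (f x)) f = run_tree (k (f x)) g"
    by (rule Query.IH[OF rangeI])
  with fx(2) show ?case
    by simp
qed simp

lemma tree_queries_subset:
  "valid_tree V B t q \<Longrightarrow> Bs \<subseteq> B \<Longrightarrow> tree_queries t Bs \<subseteq> V"
  by (induction t arbitrary: q) auto

lemma finite_tree_queries: "finite Bs \<Longrightarrow> finite (tree_queries t Bs)"
  by (induction t) auto

lemma card_tree_queries_le:
  assumes "valid_tree V B t q" and "Bs \<subseteq> B" and "finite Bs"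
  shows "card (tree_queries t Bs) \<le> (\<Sum>i<q. card Bs ^ i)"
  using assms(1)
proof (induction t arbitrary: q)
  case (Leaf r)
  then show ?case by simp
next
  case (Query x k)
  then obtain p where q: "q = Suc p" and valid: "\<forall>b\<in>B. valid_tree V B (k b) p"
    by (cases q) auto
  have "finite (\<Union>b\<in>Bs. tree_queries (k b) Bs)"
    using assms(3) finite_tree_queries by blast
  then have "card (tree_queries (Query x k) Bs) \<le> 1 + card (\<Union>b\<in>Bs. tree_queries (k b) Bs)"
    by (simp add: card_insert_if)
  also have "\<dots> \<le> 1 + (\<Sum>b\<in>Bs. card (tree_queries (k b) Bs))"
    using card_UN_le[OF assms(3)] by simp
  also have "\<dots> \<le> 1 + (\<Sum>b\<in>Bs. \<Sum>i<p. card Bs ^ i)"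
    using Query.IH[OF rangeI] valid assms(2) by (intro add_left_mono sum_mono) blast
  also have "\<dots> = (\<Sum>i<q. card Bs ^ i)"
    unfolding q sum.lessThan_Suc_shift by (simp add: sum_distrib_left)
  finally show ?case .
qed

lemma sum_prob_eq_expectation_card:
  fixes T :: "'t pmf" and P :: "'w \<Rightarrow> 't \<Rightarrow> bool"
  assumes "finite \<Omega>"
  shows "(\<Sum>\<omega>\<in>\<Omega>. measure_pmf.prob T {t. P \<omega> t})
       = measure_pmf.expectation T (\<lambda>t. real (card {\<omega>\<in>\<Omega>. P \<omega> t}))"
proof -
  have "(\<Sum>\<omega>\<in>\<Omega>. measure_pmf.prob T {t. P \<omega> t})
      = (\<Sum>\<omega>\<in>\<Omega>. measure_pmf.expectation T (indicator {t. P \<omega> t}))"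
    by simp
  also have "\<dots> = measure_pmf.expectation T (\<lambda>t. \<Sum>\<omega>\<in>\<Omega>. indicator {t. P \<omega> t} t)"
    by (subst Bochner_Integration.integral_sum) (auto intro: measure_pmf.integrable_const_bound[where B=1])
  also have "\<dots> = measure_pmf.expectation T (\<lambda>t. real (card {\<omega>\<in>\<Omega>. P \<omega> t}))"
    using assms by (simp add: indicator_def sum.If_cases Int_def)
  finally show ?thesis .
qed

lemma sum_prob_le_of_card_le:
  fixes T :: "'t pmf" and P Q :: "'w \<Rightarrow> 't \<Rightarrow> bool"
  assumes "finite \<Omega>"
    and "\<forall>t\<in>set_pmf T. card {\<omega>\<in>\<Omega>. P \<omega> t} \<le> card {\<omega>\<in>\<Omega>. Q \<omega> t} + K"
  shows "(\<Sum>\<omega>\<in>\<Omega>. measure_pmf.prob T {t. P \<omega> t})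
       \<le> (\<Sum>\<omega>\<in>\<Omega>. measure_pmf.prob T {t. Q \<omega> t}) + K"
proof -
  have integrable: "integrable (measure_pmf T) (\<lambda>t. real (card {\<omega>\<in>\<Omega>. R \<omega> t}))"
    for R :: "'w \<Rightarrow> 't \<Rightarrow> bool"
    using assms(1) by (intro measure_pmf.integrable_const_bound[where B="card \<Omega>"])
      (auto intro: card_mono)
  have "measure_pmf.expectation T (\<lambda>t. real (card {\<omega>\<in>\<Omega>. P \<omega> t}))
      \<le> measure_pmf.expectation T (\<lambda>t. real (card {\<omega>\<in>\<Omega>. Q \<omega> t}) + K)"
  proof (rule integral_mono_AE)
    show "AE t in T. real (card {\<omega>\<in>\<Omega>. P \<omega> t}) \<le> real (card {\<omega>\<in>\<Omega>. Q \<omega> t}) + K"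
      using assms(2) by (intro AE_pmfI) (metis of_nat_add of_nat_le_iff)
  qed (use integrable in auto)
  also have "\<dots> = measure_pmf.expectation T (\<lambda>t. real (card {\<omega>\<in>\<Omega>. Q \<omega> t})) + K"
    using integrable by simp
  finally show ?thesis
    by (simp add: sum_prob_eq_expectation_card[OF assms(1)])
qed

lemma csp_instance_uniform:
  assumes "finite V" and "V \<noteq> {}" and "C \<subseteq> V \<times> V"
  shows "csp_instance V C (\<lambda>_. 1 / card V)"
  using assms by (auto simp: csp_instance_def card_gt_0_iff Suc_le_eq)

lemma card_violated_matching_le:
  assumes g: "satisfying B \<gamma> V C g" and "C \<subseteq> V \<times> V"
    and violated: "\<forall>x\<in>P. (p x, q x) \<in> C \<and> (f (p x), f (q x)) \<notin> \<gamma>"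
    and "inj_on p P" and "inj_on q P" and "\<forall>x\<in>P. \<forall>y\<in>P. p x \<noteq> q y"
    and "finite V"
  shows "card P \<le> card {v\<in>V. f v \<noteq> g v}"
proof -
  define pick where "pick x = (if f (p x) \<noteq> g (p x) then p x else q x)" for x
  have "pick x \<in> {v\<in>V. f v \<noteq> g v}" if "x \<in> P" for x
  proof -
    have "(g (p x), g (q x)) \<in> \<gamma>"
      using g violated that unfolding satisfying_def by auto
    then show ?thesis
      using violated that assms(2) unfolding pick_def by (auto split: if_splits)
  qed
  moreover have "inj_on pick P"
    using assms(4-6) unfolding pick_def inj_on_def by (auto split: if_splits; metis)
  ultimately show ?thesis
    using assms(7) by (intro card_inj_on_le) auto
qed

lemma csp_dist_ge_card_violated_matching:
  assumes "csp_instance V C w" and "satisfying B \<gamma> V C g0"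
    and "\<forall>x\<in>P. (p x, q x) \<in> C \<and> (f (p x), f (q x)) \<notin> \<gamma>"
    and "inj_on p P" and "inj_on q P" and "\<forall>x\<in>P. \<forall>y\<in>P. p x \<noteq> q y"
    and "0 \<le> c" and "\<forall>v\<in>V. c \<le> w v"
  shows "real (card P) * c \<le> csp_dist B \<gamma> V C w f"
  unfolding csp_dist_def
proof (rule cInf_greatest)
  show "{\<Sum>v\<in>{v\<in>V. f v \<noteq> g v}. w v | g. satisfying B \<gamma> V C g} \<noteq> {}"
    using assms(2) by blast
next
  fix d assume "d \<in> {\<Sum>v\<in>{v\<in>V. f v \<noteq> g v}. w v | g. satisfying B \<gamma> V C g}"
  then obtain g where g: "satisfying B \<gamma> V C g" and d: "d = (\<Sum>v\<in>{v\<in>V. f v \<noteq> g v}. w v)"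
    by blast
  have "real (card P) * c \<le> real (card {v\<in>V. f v \<noteq> g v}) * c"
    using card_violated_matching_le[OF g _ assms(3-6)] assms(1,7)
    unfolding csp_instance_def by (simp add: mult_right_mono)
  also have "\<dots> \<le> d"
    unfolding d using assms(8) sum_mono[of "{v\<in>V. f v \<noteq> g v}" "\<lambda>_. c" w] by simp
  finally show "real (card P) * c \<le> d" .
qed

definition cube_vertex :: "nat \<Rightarrow> nat set \<Rightarrow> nat" where
  "cube_vertex c x = 4 * set_encode x + c"

definition vertex_layer :: "nat \<Rightarrow> nat" where
  "vertex_layer v = v mod 4"

definition vertex_set :: "nat \<Rightarrow> nat set" where
  "vertex_set v = set_decode (v div 4)"

lemma vertex_layer_cube_vertex [simp]: "c < 4 \<Longrightarrow> vertex_layer (cube_vertex c x) = c"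
  by (simp add: vertex_layer_def cube_vertex_def)

lemma vertex_set_cube_vertex [simp]:
  "c < 4 \<Longrightarrow> finite x \<Longrightarrow> vertex_set (cube_vertex c x) = x"
  by (simp add: vertex_set_def cube_vertex_def set_encode_inverse)

definition cube_vertices :: "nat \<Rightarrow> nat set" where
  "cube_vertices t = (\<lambda>(c, x). cube_vertex c x) ` ({..<4} \<times> Pow {..<t})"

definition cube_constraints :: "nat \<Rightarrow> (nat \<times> nat) set" where
  "cube_constraints t = {(cube_vertex c x, cube_vertex (Suc c) (insert j x)) | c x j.
     c \<in> {0, 2} \<and> x \<subseteq> {..<t} \<and> j < t \<and> j \<notin> x}"

lemma cube_vertex_in_cube_vertices: "c < 4 \<Longrightarrow> x \<subseteq> {..<t} \<Longrightarrow> cube_vertex c x \<in> cube_vertices t"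
  unfolding cube_vertices_def by force

lemma vertex_set_subset:
  assumes "v \<in> cube_vertices t"
  shows "vertex_set v \<subseteq> {..<t}"
proof -
  obtain c x where "v = cube_vertex c x" and "c < 4" and x: "x \<subseteq> {..<t}"
    using assms unfolding cube_vertices_def by auto
  moreover have "finite x"
    using x finite_subset by blast
  ultimately show ?thesis
    by simp
qed

lemma finite_cube_vertices: "finite (cube_vertices t)"
  unfolding cube_vertices_def by simp

lemma card_cube_vertices: "card (cube_vertices t) = 4 * 2 ^ t"
proof -
  have "inj_on (\<lambda>(c, x). cube_vertex c x) ({..<4} \<times> Pow {..<t})"
    by (rule inj_on_inverseI[where g = "\<lambda>v. (vertex_layer v, vertex_set v)"])
      (auto dest: finite_subset)
  then show ?thesis
    unfolding cube_vertices_def by (simp add: card_image card_cartesian_product card_Pow)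
qed

lemma cube_constraints_subset: "cube_constraints t \<subseteq> cube_vertices t \<times> cube_vertices t"
  unfolding cube_constraints_def by (auto intro!: cube_vertex_in_cube_vertices)

lemma csp_instance_cube:
  "csp_instance (cube_vertices t) (cube_constraints t) (\<lambda>_. 1 / card (cube_vertices t))"
proof (rule csp_instance_uniform[OF finite_cube_vertices _ cube_constraints_subset])
  show "cube_vertices t \<noteq> {}"
    using card_cube_vertices[of t] by force
qed

definition bool_val :: "'b \<Rightarrow> 'b \<Rightarrow> bool \<Rightarrow> 'b" where
  "bool_val a0 a1 b = (if b then a1 else a0)"

(* Layers 0 and 1 are the lower and upper ends of the first copy, layers 2 and 3 those of the
  second, which uses the complement of A. A lower vertex containing i and an upper vertex
  missing i carry the constant bits False and True, which satisfy every constraint. *)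
definition cube_bits :: "bool \<Rightarrow> nat \<Rightarrow> nat set set \<Rightarrow> nat \<Rightarrow> bool" where
  "cube_bits s i A v = (let c = vertex_layer v; x = vertex_set v in
     if c = 0 then i \<notin> x \<and> x \<in> A
     else if c = 1 then i \<in> x \<longrightarrow> (x - {i} \<in> A) = s
     else if c = 2 then i \<notin> x \<and> x \<notin> A
     else i \<in> x \<longrightarrow> (x - {i} \<in> A) \<noteq> s)"

lemma cube_bits_monotone:
  assumes "(u, v) \<in> cube_constraints t" and "cube_bits True i A u"
  shows "cube_bits True i A v"
proof -
  obtain c x j where c: "c \<in> {0, 2}" and x: "x \<subseteq> {..<t}" "j \<notin> x"
    and uv: "u = cube_vertex c x" "v = cube_vertex (Suc c) (insert j x)"
    using assms(1) unfolding cube_constraints_def by blast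
  have "finite x"
    using x(1) finite_subset by blast
  then show ?thesis
    using assms(2) c x(2) unfolding uv cube_bits_def by (cases "i = j") auto
qed

lemma satisfying_cube_bits_True:
  assumes "(a0, a1) \<in> \<gamma>" and "(a0, a0) \<in> \<gamma>" and "(a1, a1) \<in> \<gamma>"
    and "a0 \<in> B" and "a1 \<in> B"
  shows "satisfying B \<gamma> (cube_vertices t) (cube_constraints t) (bool_val a0 a1 \<circ> cube_bits True i A)"
  using assms cube_bits_monotone by (fastforce simp: satisfying_def is_assignment_def bool_val_def)

definition violated_edge :: "nat \<Rightarrow> nat set set \<Rightarrow> nat set \<Rightarrow> nat \<times> nat" where
  "violated_edge i A x = (let c = if x \<in> A then 0 else 2 in
     (cube_vertex c x, cube_vertex (Suc c) (insert i x)))"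

lemma cube_bits_False_violated:
  assumes "i < t" and "x \<subseteq> {..<t}" and "i \<notin> x"
  shows "violated_edge i A x \<in> cube_constraints t"
    and "cube_bits False i A (fst (violated_edge i A x))"
    and "\<not> cube_bits False i A (snd (violated_edge i A x))"
proof -
  define c where "c = (if x \<in> A then 0 else 2 :: nat)"
  have "c \<in> {0, 2}" and "violated_edge i A x = (cube_vertex c x, cube_vertex (Suc c) (insert i x))"
    unfolding c_def violated_edge_def Let_def by simp_all
  then show "violated_edge i A x \<in> cube_constraints t"
    using assms unfolding cube_constraints_def by blast
  have "finite x"
    using assms(2) finite_subset by blast
  then show "cube_bits False i A (fst (violated_edge i A x))"
    and "\<not> cube_bits False i A (snd (violated_edge i A x))"
    using assms(3) unfolding violated_edge_def cube_bits_def by auto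
qed

lemma fst_violated_edge_neq_snd: "fst (violated_edge i A x) \<noteq> snd (violated_edge i A' y)"
proof -
  have "even (vertex_layer (fst (violated_edge i A x)))"
    and "odd (vertex_layer (snd (violated_edge i A' y)))"
    unfolding violated_edge_def by simp_all
  then show ?thesis
    by metis
qed

lemma inj_on_violated_edge_ends:
  assumes "\<forall>x\<in>P. finite x \<and> i \<notin> x"
  shows "inj_on (\<lambda>x. fst (violated_edge i A x)) P" and "inj_on (\<lambda>x. snd (violated_edge i A x)) P"
proof -
  show "inj_on (\<lambda>x. fst (violated_edge i A x)) P"
    by (rule inj_on_inverseI[where g = vertex_set]) (simp add: violated_edge_def assms)
  have "vertex_set (snd (violated_edge i A x)) - {i} = x" if "x \<in> P" for x
    using that assms unfolding violated_edge_def by auto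
  then show "inj_on (\<lambda>x. snd (violated_edge i A x)) P"
    by (rule inj_on_inverseI)
qed

lemma csp_dist_cube_bits_False:
  assumes "(a0, a1) \<in> \<gamma>" and "(a0, a0) \<in> \<gamma>" and "(a1, a1) \<in> \<gamma>" and "(a1, a0) \<notin> \<gamma>"
    and "a0 \<in> B" and "a1 \<in> B" and "i < t"
  shows "1 / 8 \<le> csp_dist B \<gamma> (cube_vertices t) (cube_constraints t) (\<lambda>_. 1 / card (cube_vertices t))
                    (bool_val a0 a1 \<circ> cube_bits False i A)"
proof -
  define P where "P = Pow ({..<t} - {i})"
  have P: "x \<subseteq> {..<t} \<and> finite x \<and> i \<notin> x" if "x \<in> P" for x
    using that finite_subset unfolding P_def by blast
  have "real (card P) * (1 / card (cube_vertices t))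
      \<le> csp_dist B \<gamma> (cube_vertices t) (cube_constraints t) (\<lambda>_. 1 / card (cube_vertices t))
           (bool_val a0 a1 \<circ> cube_bits False i A)"
  proof (rule csp_dist_ge_card_violated_matching[OF csp_instance_cube satisfying_cube_bits_True[OF assms(1-3,5,6)],
        where p = "\<lambda>x. fst (violated_edge i A x)" and q = "\<lambda>x. snd (violated_edge i A x)"])
    show "\<forall>x\<in>P. (fst (violated_edge i A x), snd (violated_edge i A x)) \<in> cube_constraints t
        \<and> ((bool_val a0 a1 \<circ> cube_bits False i A) (fst (violated_edge i A x)),
            (bool_val a0 a1 \<circ> cube_bits False i A) (snd (violated_edge i A x))) \<notin> \<gamma>"
      using cube_bits_False_violated[OF assms(7)] P assms(4) by (simp add: bool_val_def)
  qed (use P inj_on_violated_edge_ends fst_violated_edge_neq_snd in auto)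
  moreover have "real (card P) * (1 / card (cube_vertices t)) = 1 / 8"
  proof -
    have "card P = 2 ^ (t - 1)"
      using assms(7) unfolding P_def by (simp add: card_Pow)
    moreover have "(2::real) ^ t = 2 * 2 ^ (t - 1)"
      using assms(7) by (cases t) simp_all
    ultimately show ?thesis
      by (simp add: card_cube_vertices)
  qed
  ultimately show ?thesis
    by simp
qed

definition splitting_directions :: "nat set \<Rightarrow> nat set" where
  "splitting_directions S =
     {i. \<exists>u\<in>S. \<exists>v\<in>S. i \<notin> vertex_set u \<and> vertex_set v = insert i (vertex_set u)}"

lemma splitting_directions_subset:
  "splitting_directions S \<subseteq> (\<lambda>(u, v). the_elem (vertex_set v - vertex_set u)) ` (S \<times> S)"
proof
  fix i assume "i \<in> splitting_directions S"
  then obtain u v where uv: "(u, v) \<in> S \<times> S"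
    and "i \<notin> vertex_set u" and "vertex_set v = insert i (vertex_set u)"
    unfolding splitting_directions_def by blast
  then have "vertex_set v - vertex_set u = {i}"
    by blast
  then show "i \<in> (\<lambda>(u, v). the_elem (vertex_set v - vertex_set u)) ` (S \<times> S)"
    by (intro rev_image_eqI[OF uv]) simp
qed

lemma finite_splitting_directions: "finite S \<Longrightarrow> finite (splitting_directions S)"
  using splitting_directions_subset finite_subset by blast

lemma card_splitting_directions_le:
  assumes "finite S"
  shows "card (splitting_directions S) \<le> card S ^ 2"
proof -
  have "card (splitting_directions S)
      \<le> card ((\<lambda>(u, v). the_elem (vertex_set v - vertex_set u)) ` (S \<times> S))"
    using assms splitting_directions_subset by (intro card_mono) simp_all
  also have "\<dots> \<le> card (S \<times> S)"
    by (rule card_image_le) (simp add: assms)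
  finally show ?thesis
    by (simp add: card_cartesian_product power2_eq_square)
qed

definition flip_set :: "nat \<Rightarrow> nat set \<Rightarrow> nat set set" where
  "flip_set i S = {vertex_set v - {i} | v. v \<in> S \<and> i \<in> vertex_set v}"

lemma cube_bits_True_flip:
  assumes "i \<notin> splitting_directions S" and "v \<in> S"
  shows "cube_bits True i (sym_diff A (flip_set i S)) v = cube_bits False i A v"
proof (cases "i \<in> vertex_set v")
  case True
  then have "vertex_set v - {i} \<in> flip_set i S"
    using assms(2) unfolding flip_set_def by blast
  with True show ?thesis
    unfolding cube_bits_def Let_def by simp
next
  case False
  have "vertex_set v \<notin> flip_set i S"
  proof
    assume "vertex_set v \<in> flip_set i S"
    then obtain u where "u \<in> S" "i \<in> vertex_set u" "vertex_set v = vertex_set u - {i}"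
      unfolding flip_set_def by blast
    then have "vertex_set u = insert i (vertex_set v)"
      by blast
    then have "i \<in> splitting_directions S"
      using assms(2) \<open>u \<in> S\<close> False unfolding splitting_directions_def by blast
    with assms(1) show False ..
  qed
  with False show ?thesis
    unfolding cube_bits_def Let_def by simp
qed

lemma card_accepting_cube_bits_True_eq_False:
  fixes tr :: "(nat, 'b) qtree" and a0 a1 :: 'b
  defines "S \<equiv> tree_queries tr {a0, a1}"
  assumes "S \<subseteq> cube_vertices t" and "i \<notin> splitting_directions S"
  shows "card {A \<in> Pow (Pow {..<t}). run_tree tr (bool_val a0 a1 \<circ> cube_bits True i A)}
       = card {A \<in> Pow (Pow {..<t}). run_tree tr (bool_val a0 a1 \<circ> cube_bits False i A)}"
proof -
  define flip where "flip A = sym_diff A (flip_set i S)" for A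
  have "flip_set i S \<subseteq> Pow {..<t}"
    using assms(2) vertex_set_subset unfolding flip_set_def by blast
  then have flip_Pow: "flip A \<subseteq> Pow {..<t}" if "A \<subseteq> Pow {..<t}" for A
    using that unfolding flip_def by blast
  have flip_flip: "flip (flip A) = A" for A
    unfolding flip_def by blast
  have run_flip: "run_tree tr (bool_val a0 a1 \<circ> cube_bits True i (flip A))
      = run_tree tr (bool_val a0 a1 \<circ> cube_bits False i A)" for A
  proof -
    have "\<forall>v\<in>S. (bool_val a0 a1 \<circ> cube_bits True i (flip A)) v \<in> {a0, a1}
        \<and> (bool_val a0 a1 \<circ> cube_bits True i (flip A)) v = (bool_val a0 a1 \<circ> cube_bits False i A) v"
      using cube_bits_True_flip[OF assms(3)] by (simp add: flip_def bool_val_def)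
    then show ?thesis
      unfolding S_def by (rule run_tree_cong)
  qed
  then have run_flip_inv: "run_tree tr (bool_val a0 a1 \<circ> cube_bits True i A)
      = run_tree tr (bool_val a0 a1 \<circ> cube_bits False i (flip A))" for A
    by (metis flip_flip)
  have "bij_betw flip {A \<in> Pow (Pow {..<t}). run_tree tr (bool_val a0 a1 \<circ> cube_bits False i A)}
      {A \<in> Pow (Pow {..<t}). run_tree tr (bool_val a0 a1 \<circ> cube_bits True i A)}"
    by (rule bij_betw_byWitness[where f' = flip]) (auto simp: flip_flip run_flip run_flip_inv dest: flip_Pow)
  then show ?thesis
    by (simp add: bij_betw_same_card)
qed

lemma card_accepting_cube_pairs_le:
  fixes tr :: "(nat, 'b) qtree" and a0 a1 :: 'b and t :: nat
  defines "S \<equiv> tree_queries tr {a0, a1}" and "\<Omega> \<equiv> {..<t} \<times> Pow (Pow {..<t})"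
  assumes "S \<subseteq> cube_vertices t"
  shows "card {\<omega>\<in>\<Omega>. run_tree tr (bool_val a0 a1 \<circ> cube_bits True (fst \<omega>) (snd \<omega>))}
       \<le> card {\<omega>\<in>\<Omega>. run_tree tr (bool_val a0 a1 \<circ> cube_bits False (fst \<omega>) (snd \<omega>))}
         + card S ^ 2 * card (Pow (Pow {..<t}))"
proof -
  define M where "M = card (Pow (Pow {..<t}))"
  define count where
    "count s i = card {A \<in> Pow (Pow {..<t}). run_tree tr (bool_val a0 a1 \<circ> cube_bits s i A)}" for s i
  have split: "card {\<omega>\<in>\<Omega>. run_tree tr (bool_val a0 a1 \<circ> cube_bits s (fst \<omega>) (snd \<omega>))}
      = (\<Sum>i<t. count s i)" for s
  proof -
    have "{\<omega>\<in>\<Omega>. run_tree tr (bool_val a0 a1 \<circ> cube_bits s (fst \<omega>) (snd \<omega>))}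
        = (SIGMA i:{..<t}. {A \<in> Pow (Pow {..<t}). run_tree tr (bool_val a0 a1 \<circ> cube_bits s i A)})"
      unfolding \<Omega>_def by auto
    then show ?thesis
      unfolding count_def by simp
  qed
  have "count True i \<le> count False i + (if i \<in> splitting_directions S then M else 0)" for i
  proof (cases "i \<in> splitting_directions S")
    case True
    have "count True i \<le> M"
      unfolding count_def M_def by (intro card_mono) auto
    with True show ?thesis
      by simp
  next
    case False
    with card_accepting_cube_bits_True_eq_False[OF assms(3)[unfolded S_def]] show ?thesis
      unfolding count_def S_def by simp
  qed
  then have "(\<Sum>i<t. count True i)
      \<le> (\<Sum>i<t. count False i) + (\<Sum>i<t. if i \<in> splitting_directions S then M else 0)"
    by (simp add: sum_mono flip: sum.distrib)
  also have "(\<Sum>i<t. if i \<in> splitting_directions S then M else 0)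
      = card ({..<t} \<inter> splitting_directions S) * M"
    by (simp add: sum.If_cases)
  also have "\<dots> \<le> card S ^ 2 * M"
  proof -
    have "finite S"
      using assms(3) finite_cube_vertices finite_subset by blast
    then have "card ({..<t} \<inter> splitting_directions S) \<le> card (splitting_directions S)"
      by (intro card_mono finite_splitting_directions) auto
    also have "\<dots> \<le> card S ^ 2"
      using \<open>finite S\<close> by (rule card_splitting_directions_le)
    finally show ?thesis
      by simp
  qed
  finally show ?thesis
    unfolding split M_def by simp
qed

lemma sum_accept_prob_cube_le:
  fixes T :: "(nat, 'b) qtree pmf" and t :: nat
  defines "\<Omega> \<equiv> {..<t} \<times> Pow (Pow {..<t})"
  assumes "\<forall>tr\<in>set_pmf T. valid_tree (cube_vertices t) B tr q" and "a0 \<in> B" and "a1 \<in> B"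
  shows "(\<Sum>\<omega>\<in>\<Omega>. accept_prob T (bool_val a0 a1 \<circ> cube_bits True (fst \<omega>) (snd \<omega>)))
       \<le> (\<Sum>\<omega>\<in>\<Omega>. accept_prob T (bool_val a0 a1 \<circ> cube_bits False (fst \<omega>) (snd \<omega>)))
         + 4 ^ q * card (Pow (Pow {..<t}))"
proof -
  have "card {\<omega>\<in>\<Omega>. run_tree tr (bool_val a0 a1 \<circ> cube_bits True (fst \<omega>) (snd \<omega>))}
      \<le> card {\<omega>\<in>\<Omega>. run_tree tr (bool_val a0 a1 \<circ> cube_bits False (fst \<omega>) (snd \<omega>))}
        + 4 ^ q * card (Pow (Pow {..<t}))" if "tr \<in> set_pmf T" for tr
  proof -
    let ?S = "tree_queries tr {a0, a1}"
    have valid: "valid_tree (cube_vertices t) B tr q"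
      using assms(2) that by blast
    have "card ?S \<le> (\<Sum>i<q. card {a0, a1} ^ i)"
      using valid assms(3,4) by (intro card_tree_queries_le) auto
    also have "\<dots> \<le> (\<Sum>i<q. 2 ^ i)"
      by (intro sum_mono power_mono) (simp_all add: card_insert_le_m1)
    also have "\<dots> \<le> 2 ^ q"
      by (simp add: atLeast0LessThan[symmetric] sum_power2)
    finally have "card ?S ^ 2 \<le> (2 ^ q) ^ 2"
      by (rule power_mono) simp
    also have "(2 ^ q) ^ 2 = (4::nat) ^ q"
      by (simp add: power2_eq_square flip: power_mult_distrib)
    finally have "card ?S ^ 2 * card (Pow (Pow {..<t})) \<le> 4 ^ q * card (Pow (Pow {..<t}))"
      by (rule mult_right_mono) simp
    moreover have "?S \<subseteq> cube_vertices t"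
      using valid assms(3,4) by (intro tree_queries_subset) auto
    ultimately show ?thesis
      using card_accepting_cube_pairs_le[of tr a0 a1 t] unfolding \<Omega>_def by linarith
  qed
  then show ?thesis
    unfolding accept_prob_def \<Omega>_def
    by (intro sum_prob_le_of_card_le) auto
qed

lemma accept_prob_cube_bits_False_le:
  assumes "(a0, a1) \<in> \<gamma>" and "(a0, a0) \<in> \<gamma>" and "(a1, a1) \<in> \<gamma>" and "(a1, a0) \<notin> \<gamma>"
    and "a0 \<in> B" and "a1 \<in> B" and "i < t"
    and tester: "is_tester B \<gamma> (cube_vertices t) (cube_constraints t) (\<lambda>_. 1 / card (cube_vertices t)) \<epsilon> q T"
    and "\<epsilon> < 1 / 8"
  shows "accept_prob T (bool_val a0 a1 \<circ> cube_bits False i A) \<le> 1 / 3"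
proof -
  have "eps_far B \<gamma> (cube_vertices t) (cube_constraints t) (\<lambda>_. 1 / card (cube_vertices t)) \<epsilon>
      (bool_val a0 a1 \<circ> cube_bits False i A)"
    using csp_dist_cube_bits_False[OF assms(1-7), of A] assms(9) unfolding eps_far_def by linarith
  moreover have "is_assignment B (cube_vertices t) (bool_val a0 a1 \<circ> cube_bits False i A)"
    using assms(5,6) by (simp add: is_assignment_def bool_val_def)
  ultimately show ?thesis
    using tester unfolding is_tester_def by auto
qed

lemma cube_dimension_le_of_tester:
  assumes "(a0, a1) \<in> \<gamma>" and "(a0, a0) \<in> \<gamma>" and "(a1, a1) \<in> \<gamma>" and "(a1, a0) \<notin> \<gamma>"
    and "a0 \<in> B" and "a1 \<in> B"
    and tester: "is_tester B \<gamma> (cube_vertices t) (cube_constraints t) (\<lambda>_. 1 / card (cube_vertices t)) \<epsilon> q T"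
    and "\<epsilon> < 1 / 8"
  shows "t \<le> 3 * 4 ^ q"
proof -
  define \<Omega> where "\<Omega> = {..<t} \<times> Pow (Pow {..<t})"
  define M where "M = card (Pow (Pow {..<t}))"
  have "card \<Omega> * (2 / 3) = (\<Sum>\<omega>\<in>\<Omega>. 2 / 3 :: real)"
    by simp
  also have "\<dots> \<le> (\<Sum>\<omega>\<in>\<Omega>. accept_prob T (bool_val a0 a1 \<circ> cube_bits True (fst \<omega>) (snd \<omega>)))"
    using tester satisfying_cube_bits_True[OF assms(1-3,5,6)] unfolding is_tester_def
    by (intro sum_mono) blast
  also have "\<dots> \<le> (\<Sum>\<omega>\<in>\<Omega>. accept_prob T (bool_val a0 a1 \<circ> cube_bits False (fst \<omega>) (snd \<omega>))) + 4 ^ q * M"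
    using tester assms(5,6) unfolding \<Omega>_def M_def is_tester_def
    by (intro sum_accept_prob_cube_le) auto
  also have "\<dots> \<le> (\<Sum>\<omega>\<in>\<Omega>. 1 / 3) + 4 ^ q * M"
    using accept_prob_cube_bits_False_le[OF assms(1-6) _ tester assms(8)]
    by (intro add_right_mono sum_mono) (auto simp: \<Omega>_def)
  finally have "real (t * M) \<le> 3 * real (4 ^ q * M)"
    by (simp add: \<Omega>_def M_def card_cartesian_product)
  then have "t * M \<le> 3 * 4 ^ q * M"
    by (simp only: of_nat_mult[symmetric] of_nat_le_iff of_nat_numeral mult.assoc)
  then show ?thesis
    by (simp add: M_def card_Pow)
qed

theorem mainTheorem10:
  fixes B :: "'b set" and \<gamma> :: "('b \<times> 'b) set" and zero one :: 'b
  assumes "finite B" and "\<gamma> \<subseteq> B \<times> B" and "zero \<in> B" and "one \<in> B"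
    and "(zero, one) \<in> \<gamma>" and "(zero, zero) \<in> \<gamma>" and "(one, one) \<in> \<gamma>"
    and "(one, zero) \<notin> \<gamma>"
  shows "\<not> constant_query_testable B \<gamma>"
proof
  assume "constant_query_testable B \<gamma>"
  then obtain q where "\<forall>V C w. csp_instance V C w \<longrightarrow> (\<exists>T. is_tester B \<gamma> V C w (1 / 10) q T)"
    unfolding constant_query_testable_def by force
  then obtain T where "is_tester B \<gamma> (cube_vertices (3 * 4 ^ q + 1)) (cube_constraints (3 * 4 ^ q + 1))
      (\<lambda>_. 1 / card (cube_vertices (3 * 4 ^ q + 1))) (1 / 10) q T"
    using csp_instance_cube by blast
  then have "3 * 4 ^ q + 1 \<le> (3 * 4 ^ q :: nat)"
    by (rule cube_dimension_le_of_tester[OF assms(5-8,3,4)]) simp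
  then show False
    by simp
qed

end
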